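(* Let $S=s_1,\ldots,s_n$ be a sequence of nonnegative integers, let $\gamma>0$, let $k$ be a positive integer and $\epsilon>0$. Let $(L^*,\alpha^*,\beta^* )$ be an optimal solution of $\textsc{Geo}$ for $S,\gamma,k$, and let $(L,\alpha,\beta)$ be the output of $\textit{ApproxGeo}(S,\gamma,k,\epsilon)$. Then \[ \mathrm{score}_{\mathrm{geo}}(L,S;\alpha,\beta,\gamma)\le(1+\epsilon)\,\mathrm{score}_{\mathrm{geo}}(L^*,S;\alpha^*,\beta^*,\gamma). \]
   Context: A level sequence is $L=\ell_1,\ldots,\ell_n$ of integers with $0\le\ell_i\le k$; set $\ell_0=0$. The penalty is $\mathrm{pen}(x,y)=\max(y-x,0)\,\gamma\log n$. The geometric distribution is $p_{\mathrm{geo}}(s;\lambda)=(1-\lambda)\lambda^s$ (with $0^0=1$). For $0\le\alpha<1$ and $0<\beta<1$ the score is $\mathrm{score}_{\mathrm{geo}}(L,S;\alpha,\beta,\gamma)=\sum_{i=1}^n\big[-\log p_{\mathrm{geo}}(s_i;\beta\alpha^{\ell_i})+\mathrm{pen}(\ell_{i-1},\ell_i)\big]$. Problem $\textsc{Geo}$: given $S,\gamma,k$, find $L$, $\alpha$, $\beta$ minimizing this score. $\textit{Viterbi}(S,\alpha,\beta,\gamma,k,p_{\mathrm{geo}})$ returns a level sequence minimizing the score for fixed $\alpha,\beta$. Algorithm $\textit{GeoAlpha}(S,\alpha,\gamma,k,\epsilon)$: let $\mu=\frac1n\sum_i s_i$; if $\mu=0$ return the all-zero level sequence; otherwise let $\eta=\mu/(\mu+1)$,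 $c=1$; while $\eta^c\le\mu/(\mu+1/n)$: set $\beta=\eta^c$, run $\textit{Viterbi}(S,\alpha,\beta,\gamma,k,p_{\mathrm{geo}})$, set $c\leftarrow c/(1+\epsilon)$; return the best tested solution. Algorithm $\textit{ApproxGeo}(S,\gamma,k,\epsilon)$: run $\textit{GeoAlpha}(S,0,\gamma,k,\epsilon)$; let $\mu=\frac1n\sum_i s_i$, $\eta=1/(1+nk)$, $\sigma=\mu/(\mu+1/n)$, $c=1$; while $\eta^c\le\sigma^{\epsilon/k}$: set $\alpha=\eta^c$, run $\textit{GeoAlpha}(S,\alpha,\gamma,k,\epsilon)$, set $c\leftarrow c/(1+\epsilon)$. Return the triple $(L,\alpha,\beta)$ with the smallest score among all observed solutions. *)

theory Defs
  imports Complex_Main "HOL-Library.Extended_Real"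
begin

text \<open>Index i (0-based) of the list corresponds to position i+1 of the paper; the
  predecessor level of position i is (0 # L) ! i, so that l_0 = 0.\<close>

definition valid_levels :: "nat \<Rightarrow> nat \<Rightarrow> nat list \<Rightarrow> bool" where
  "valid_levels k n L \<longleftrightarrow> length L = n \<and> (\<forall>x\<in>set L. x \<le> k)"

text \<open>Geometric distribution; real power with natural exponent, so 0^0 = 1.\<close>
definition p_geo :: "nat \<Rightarrow> real \<Rightarrow> real" where
  "p_geo s lam = (1 - lam) * lam ^ s"

definition neglog :: "real \<Rightarrow> ereal" where
  "neglog p = (if p > 0 then ereal (- ln p) else \<infinity>)"

definition pen :: "real \<Rightarrow> nat \<Rightarrow> nat \<Rightarrow> nat \<Rightarrow> real" where
  "pen \<gamma> n x y = max (real y - real x) 0 * \<gamma> * ln (real n)"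

definition score_geo :: "nat list \<Rightarrow> nat list \<Rightarrow> real \<Rightarrow> real \<Rightarrow> real \<Rightarrow> ereal" where
  "score_geo L S \<alpha> \<beta> \<gamma> =
     (\<Sum>i<length S. neglog (p_geo (S ! i) (\<beta> * \<alpha> ^ (L ! i)))
                    + ereal (pen \<gamma> (length S) ((0 # L) ! i) (L ! i)))"

definition geo_feasible :: "nat list \<Rightarrow> nat \<Rightarrow> nat list \<Rightarrow> real \<Rightarrow> real \<Rightarrow> bool" where
  "geo_feasible S k L \<alpha> \<beta> \<longleftrightarrow>
     valid_levels k (length S) L \<and> 0 \<le> \<alpha> \<and> \<alpha> < 1 \<and> 0 < \<beta> \<and> \<beta> < 1"

definition geo_optimal :: "nat list \<Rightarrow> real \<Rightarrow> nat \<Rightarrow> nat list \<Rightarrow> real \<Rightarrow> real \<Rightarrow> bool" where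
  "geo_optimal S \<gamma> k L \<alpha> \<beta> \<longleftrightarrow> geo_feasible S k L \<alpha> \<beta> \<and>
     (\<forall>L' \<alpha>' \<beta>'. geo_feasible S k L' \<alpha>' \<beta>' \<longrightarrow>
        score_geo L S \<alpha> \<beta> \<gamma> \<le> score_geo L' S \<alpha>' \<beta>' \<gamma>)"

text \<open>Possible outputs of Viterbi(S, alpha, beta, gamma, k, p_geo):
  any level sequence minimizing the score for fixed alpha, beta.\<close>
definition viterbi_out :: "nat list \<Rightarrow> real \<Rightarrow> real \<Rightarrow> real \<Rightarrow> nat \<Rightarrow> nat list \<Rightarrow> bool" where
  "viterbi_out S \<alpha> \<beta> \<gamma> k L \<longleftrightarrow> valid_levels k (length S) L \<and>
     (\<forall>L'. valid_levels k (length S) L' \<longrightarrow> score_geo L S \<alpha> \<beta> \<gamma> \<le> score_geo L' S \<alpha> \<beta> \<gamma>)"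

definition mean :: "nat list \<Rightarrow> real" where
  "mean S = (\<Sum>i<length S. real (S ! i)) / real (length S)"

text \<open>Value of c after j iterations of c := c/(1+eps), starting from c = 1.\<close>
definition cval :: "real \<Rightarrow> nat \<Rightarrow> real" where
  "cval \<epsilon> j = 1 / (1 + \<epsilon>) ^ j"

text \<open>Values beta tested by GeoAlpha (case mu > 0): the while loop runs iterations
  j = 0, 1, ... as long as the guard held in all iterations so far.\<close>
definition geo_alpha_betas :: "nat list \<Rightarrow> real \<Rightarrow> real set" where
  "geo_alpha_betas S \<epsilon> =
     (let \<mu> = mean S; \<eta> = \<mu> / (\<mu> + 1); n = real (length S) in
      {\<eta> powr cval \<epsilon> j | j. \<forall>i\<le>j. \<eta> powr cval \<epsilon> i \<le> \<mu> / (\<mu> + 1 / n)})"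

text \<open>Solutions (L, alpha, beta) observed during GeoAlpha(S, alpha, gamma, k, eps).
  If mu = 0 the algorithm returns the all-zero level sequence; its beta is not
  specified by the paper, so any beta in (0,1) is allowed.\<close>
definition geo_alpha_obs :: "nat list \<Rightarrow> real \<Rightarrow> real \<Rightarrow> nat \<Rightarrow> real \<Rightarrow> (nat list \<times> real \<times> real) set" where
  "geo_alpha_obs S \<alpha> \<gamma> k \<epsilon> =
     (if mean S = 0 then {(replicate (length S) 0, \<alpha>, b) | b. 0 < b \<and> b < 1}
      else {(L, \<alpha>, \<beta>) | L \<beta>. \<beta> \<in> geo_alpha_betas S \<epsilon> \<and> viterbi_out S \<alpha> \<beta> \<gamma> k L})"

text \<open>Values alpha tested in the loop of ApproxGeo.\<close>
definition approx_alphas :: "nat list \<Rightarrow> nat \<Rightarrow> real \<Rightarrow> real set" where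
  "approx_alphas S k \<epsilon> =
     (let \<mu> = mean S; n = real (length S); \<eta> = 1 / (1 + n * real k);
          \<sigma> = \<mu> / (\<mu> + 1 / n) in
      {\<eta> powr cval \<epsilon> j | j. \<forall>i\<le>j. \<eta> powr cval \<epsilon> i \<le> \<sigma> powr (\<epsilon> / real k)})"

definition approx_geo_obs :: "nat list \<Rightarrow> real \<Rightarrow> nat \<Rightarrow> real \<Rightarrow> (nat list \<times> real \<times> real) set" where
  "approx_geo_obs S \<gamma> k \<epsilon> =
     geo_alpha_obs S 0 \<gamma> k \<epsilon> \<union> (\<Union>\<alpha>\<in>approx_alphas S k \<epsilon>. geo_alpha_obs S \<alpha> \<gamma> k \<epsilon>)"

definition approx_geo_output :: "nat list \<Rightarrow> real \<Rightarrow> nat \<Rightarrow> real \<Rightarrow> nat list \<Rightarrow> real \<Rightarrow> real \<Rightarrow> bool" where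
  "approx_geo_output S \<gamma> k \<epsilon> L \<alpha> \<beta> \<longleftrightarrow> (L, \<alpha>, \<beta>) \<in> approx_geo_obs S \<gamma> k \<epsilon> \<and>
     (\<forall>(L', \<alpha>', \<beta>') \<in> approx_geo_obs S \<gamma> k \<epsilon>. score_geo L S \<alpha> \<beta> \<gamma> \<le> score_geo L' S \<alpha>' \<beta>' \<gamma>)"

end

theory Submission
  imports Defs
begin

text \<open>
  Every feasible solution can be normalised without increasing its score: shift the levels down
  until the lowest is 0, absorbing \<alpha>^min into \<beta>; raise a small positive \<alpha> to
  1/(1 + n k), where the loss in the terms -ln(1 - \<beta> \<alpha>^l) is paid for by the gain in a
  single term s l ln \<alpha>; and move \<beta> into [\<mu>/(\<mu> + 1), \<mu>/(\<mu> + 1/n)], outside of which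
  the score is monotone in \<beta>. For a normalised solution the geometric grids of GeoAlpha and
  ApproxGeo contain \<alpha>' \<le> \<alpha> and \<beta>' \<le> \<beta> with -ln \<alpha>' \<le> (1 + \<epsilon>)(-ln \<alpha>)
  and -ln \<beta>' \<le> (1 + \<epsilon>)(-ln \<beta>), which raises every term of the score by at most the
  factor 1 + \<epsilon>. The exception is \<alpha> > \<sigma>^(\<epsilon>/k) with \<sigma> = \<mu>/(\<mu> + 1/n), beyond the
  \<alpha>-grid: then all rates \<beta> \<alpha>^l lie within the factor \<sigma>^\<epsilon> of \<beta>, and the all-zero level
  sequence with the maximum-likelihood rate \<mu>/(\<mu> + 1), tested in the run with \<alpha> = 0, is
  already good enough. The output, being best among all tested solutions, inherits the bound.
\<close>

section \<open>Scores of level sequences\<close>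

text \<open>-ln p_geo s (b * a), split so that the contributions of b and of a = \<alpha>^l separate.\<close>

definition geo_nll :: "nat \<Rightarrow> real \<Rightarrow> real \<Rightarrow> real" where
  "geo_nll s b a = - ln (1 - b * a) - real s * ln b - real s * ln a"

definition zero_rate_compatible :: "nat list \<Rightarrow> nat list \<Rightarrow> real \<Rightarrow> bool" where
  "zero_rate_compatible S L \<alpha> \<longleftrightarrow> (\<forall>i<length S. \<alpha> ^ (L ! i) = 0 \<longrightarrow> S ! i = 0)"

lemma neglog_p_geo:
  assumes "0 < b" "b < 1" "0 \<le> a" "a \<le> 1" "a = 0 \<Longrightarrow> s = 0"
  shows "neglog (p_geo s (b * a)) = ereal (geo_nll s b a)"
proof (cases "a = 0")
  case True
  then show ?thesis using assms by (simp add: p_geo_def geo_nll_def neglog_def)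
next
  case False
  then have a: "0 < a" using assms by simp
  have "b * a \<le> b" using assms by (simp add: mult_left_le)
  then have ba: "0 < b * a" "b * a < 1" using a assms by (simp, linarith)
  then have "0 < p_geo s (b * a)" by (simp add: p_geo_def)
  moreover have "ln (p_geo s (b * a)) = ln (1 - b * a) + real s * (ln b + ln a)"
    unfolding p_geo_def using ba a assms by (simp add: ln_mult ln_realpow)
  ultimately show ?thesis by (simp add: neglog_def geo_nll_def algebra_simps)
qed

lemma neglog_p_geo_nonneg:
  assumes "0 \<le> l" "l \<le> 1"
  shows "0 \<le> neglog (p_geo s l)"
proof -
  have "p_geo s l \<le> 1"
    unfolding p_geo_def using assms by (intro mult_le_one) (auto simp: power_le_one)
  then show ?thesis by (simp add: neglog_def)
qed

lemma score_geo_eq_sum: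
  assumes "0 < \<beta>" "\<beta> < 1" "0 \<le> \<alpha>" "\<alpha> \<le> 1" "zero_rate_compatible S L \<alpha>"
  shows "score_geo L S \<alpha> \<beta> \<gamma> =
    ereal ((\<Sum>i<length S. geo_nll (S ! i) \<beta> (\<alpha> ^ (L ! i)))
         + (\<Sum>i<length S. pen \<gamma> (length S) ((0 # L) ! i) (L ! i)))"
proof -
  have "neglog (p_geo (S ! i) (\<beta> * \<alpha> ^ (L ! i))) = ereal (geo_nll (S ! i) \<beta> (\<alpha> ^ (L ! i)))"
    if "i < length S" for i
    using assms that by (intro neglog_p_geo) (auto simp: power_le_one zero_rate_compatible_def)
  then have "score_geo L S \<alpha> \<beta> \<gamma> = (\<Sum>i<length S.
      ereal (geo_nll (S ! i) \<beta> (\<alpha> ^ (L ! i)) + pen \<gamma> (length S) ((0 # L) ! i) (L ! i)))"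
    unfolding score_geo_def by (intro sum.cong) simp_all
  then show ?thesis by (simp add: sum.distrib)
qed

lemma zero_rate_compatible_if_score_finite:
  assumes "score_geo L S \<alpha> \<beta> \<gamma> \<noteq> \<infinity>"
  shows "zero_rate_compatible S L \<alpha>"
  unfolding zero_rate_compatible_def
proof (intro allI impI, rule ccontr)
  fix i assume i: "i < length S" and zero: "\<alpha> ^ (L ! i) = 0" and "S ! i \<noteq> 0"
  then have "neglog (p_geo (S ! i) (\<beta> * \<alpha> ^ (L ! i))) = \<infinity>"
    unfolding p_geo_def zero by (simp add: neglog_def zero_power)
  then have "score_geo L S \<alpha> \<beta> \<gamma> = \<infinity>"
    unfolding score_geo_def using i by (subst sum_Pinfty) auto
  then show False using assms by simp
qed

lemma score_geo_all_zero_levels: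
  assumes "0 < b" "b < 1"
  shows "score_geo (replicate (length S) 0) S 0 b \<gamma> =
    ereal (real (length S) * - ln (1 - b) - (\<Sum>i<length S. real (S ! i)) * ln b)"
proof -
  have "(0 # replicate (length S) (0::nat)) ! i = 0" if "i < length S" for i
    using that by (cases i) auto
  then have "score_geo (replicate (length S) 0) S 0 b \<gamma> =
      ereal (\<Sum>i<length S. - ln (1 - b) - real (S ! i) * ln b)"
    using assms by (simp add: score_geo_eq_sum zero_rate_compatible_def geo_nll_def pen_def)
  then show ?thesis by (simp add: sum_subtractf sum_distrib_right)
qed

lemma pen_nonneg: "0 \<le> \<gamma> \<Longrightarrow> 0 \<le> pen \<gamma> n x y"
  unfolding pen_def by (cases "n = 0") auto

lemma pen_mono:
  assumes "0 \<le> \<gamma>" "real y' - real x' \<le> real y - real x"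
  shows "pen \<gamma> n x' y' \<le> pen \<gamma> n x y"
proof -
  have "0 \<le> ln (real n)" by (cases "n = 0") auto
  then show ?thesis
    unfolding pen_def using assms by (intro mult_right_mono) auto
qed

lemma score_geo_shift_levels:
  assumes "0 \<le> \<gamma>" and len: "length L = length S" and low: "\<forall>x\<in>set L. m \<le> x"
  shows "score_geo (map (\<lambda>x. x - m) L) S \<alpha> (\<beta> * \<alpha> ^ m) \<gamma> \<le> score_geo L S \<alpha> \<beta> \<gamma>"
  unfolding score_geo_def
proof (intro sum_mono add_mono)
  fix i assume "i \<in> {..<length S}"
  then have i: "i < length S" "m \<le> L ! i" using len low by auto
  then show "neglog (p_geo (S ! i) (\<beta> * \<alpha> ^ m * \<alpha> ^ (map (\<lambda>x. x - m) L ! i)))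
      \<le> neglog (p_geo (S ! i) (\<beta> * \<alpha> ^ (L ! i)))"
    using len by (simp add: mult.assoc power_add[symmetric])
  have "real (map (\<lambda>x. x - m) L ! i) - real ((0 # map (\<lambda>x. x - m) L) ! i)
      \<le> real (L ! i) - real ((0 # L) ! i)"
  proof (cases i)
    case (Suc j)
    then have "m \<le> L ! j" using i len low by simp
    then show ?thesis using i len Suc by (simp add: of_nat_diff)
  qed (use i len in simp)
  then show "ereal (pen \<gamma> (length S) ((0 # map (\<lambda>x. x - m) L) ! i) (map (\<lambda>x. x - m) L ! i))
      \<le> ereal (pen \<gamma> (length S) ((0 # L) ! i) (L ! i))"
    using \<open>0 \<le> \<gamma>\<close> by (simp add: pen_mono)
qed

lemma score_geo_alpha_zero_le:
  assumes zeros: "\<forall>i<length S. S ! i = 0 \<or> L ! i = 0"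
    and "0 \<le> \<alpha>" "\<alpha> \<le> 1" "0 \<le> \<beta>" "\<beta> \<le> 1"
  shows "score_geo L S 0 \<beta> \<gamma> \<le> score_geo L S \<alpha> \<beta> \<gamma>"
  unfolding score_geo_def
proof (intro sum_mono add_mono order_refl)
  fix i assume i: "i \<in> {..<length S}"
  show "neglog (p_geo (S ! i) (\<beta> * 0 ^ (L ! i))) \<le> neglog (p_geo (S ! i) (\<beta> * \<alpha> ^ (L ! i)))"
  proof (cases "L ! i = 0")
    case False
    moreover have "S ! i = 0" using zeros i False by auto
    ultimately have "neglog (p_geo (S ! i) (\<beta> * 0 ^ (L ! i))) = 0"
      by (simp add: p_geo_def neglog_def zero_power)
    moreover have "0 \<le> neglog (p_geo (S ! i) (\<beta> * \<alpha> ^ (L ! i)))"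
      using assms by (intro neglog_p_geo_nonneg) (simp_all add: mult_le_one power_le_one)
    ultimately show ?thesis by simp
  qed simp
qed

lemma viterbi_out_exists: "\<exists>L. viterbi_out S \<alpha> \<beta> \<gamma> k L"
proof -
  define A where "A = {L. valid_levels k (length S) L}"
  have "A \<subseteq> {xs. set xs \<subseteq> {0..k} \<and> length xs = length S}" unfolding A_def valid_levels_def by auto
  then have fin: "finite A" using finite_lists_length_eq[of "{0..k}" "length S"] by (auto intro: finite_subset)
  have ne: "replicate (length S) 0 \<in> A" unfolding A_def valid_levels_def by auto
  define f where "f L = score_geo L S \<alpha> \<beta> \<gamma>" for L
  have "Min (f ` A) \<in> f ` A" using fin ne by (intro Min_in) auto
  then obtain L where L: "L \<in> A" "f L = Min (f ` A)" by auto
  have "\<forall>L'\<in>A. f L \<le> f L'" using L fin by auto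
  then show ?thesis using L unfolding viterbi_out_def A_def f_def by auto
qed

section \<open>Estimates for the negative log-likelihood\<close>

lemma ln_diff_le: "0 < (u::real) \<Longrightarrow> 0 < v \<Longrightarrow> ln u - ln v \<le> u / v - 1"
  using ln_le_minus_one[of "u / v"] by (simp add: ln_div)

lemma power_diff_le_diff:
  fixes \<alpha> \<eta> :: real
  assumes "0 \<le> \<alpha>" "\<alpha> \<le> \<eta>" "\<alpha> + \<eta> \<le> 1"
  shows "\<eta> ^ (Suc l) - \<alpha> ^ (Suc l) \<le> \<eta> - \<alpha>"
proof (induction l)
  case 0 then show ?case by simp
next
  case (Suc l)
  have eq: "\<eta> ^ (Suc (Suc l)) - \<alpha> ^ (Suc (Suc l)) = \<eta> * (\<eta> ^ (Suc l) - \<alpha> ^ (Suc l)) + \<alpha> ^ (Suc l) * (\<eta> - \<alpha>)"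
    by (simp add: algebra_simps)
  have \<alpha>_pow: "\<alpha> ^ (Suc l) \<le> \<alpha>" using assms by (simp add: mult_left_le power_le_one)
  have "\<eta> * (\<eta> ^ (Suc l) - \<alpha> ^ (Suc l)) \<le> \<eta> * (\<eta> - \<alpha>)"
    using Suc assms by (intro mult_left_mono) auto
  moreover have "\<alpha> ^ (Suc l) * (\<eta> - \<alpha>) \<le> \<alpha> * (\<eta> - \<alpha>)"
    using \<alpha>_pow assms by (intro mult_right_mono) auto
  ultimately have "\<eta> ^ (Suc (Suc l)) - \<alpha> ^ (Suc (Suc l)) \<le> (\<eta> + \<alpha>) * (\<eta> - \<alpha>)"
    unfolding eq by (simp add: algebra_simps)
  also have "\<dots> \<le> \<eta> - \<alpha>" using assms by (simp add: mult_left_le_one_le)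
  finally show ?case .
qed

lemma mle_rate_minimizes_nll:
  fixes n m t :: real
  assumes "0 < n" "0 < m" "0 < t" "t < 1"
  shows "n * - ln (1 - m / (m + n)) - m * ln (m / (m + n)) \<le> n * - ln (1 - t) - m * ln t"
proof -
  define \<eta> where "\<eta> = m / (m + n)"
  have \<eta>: "0 < \<eta>" "1 - \<eta> = n / (m + n)" using assms by (simp_all add: \<eta>_def field_simps)
  have "n * (ln (1 - t) - ln (1 - \<eta>)) \<le> n * ((1 - t) / (1 - \<eta>) - 1)"
    using assms \<eta> by (intro mult_left_mono ln_diff_le) auto
  moreover have "m * (ln t - ln \<eta>) \<le> m * (t / \<eta> - 1)"
    using assms \<eta> by (intro mult_left_mono ln_diff_le) auto
  moreover have "n * ((1 - t) / (1 - \<eta>) - 1) + m * (t / \<eta> - 1) = 0"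
    using assms unfolding \<eta>(2) by (simp add: \<eta>_def field_simps)
  ultimately show ?thesis unfolding \<eta>_def[symmetric] by (simp add: algebra_simps)
qed

lemma sum_geo_nll_le_at_smaller_beta:
  fixes s :: "nat \<Rightarrow> nat" and a :: "nat \<Rightarrow> real" and x y :: real
  assumes a: "\<And>i. i < n \<Longrightarrow> 0 \<le> a i \<and> a i \<le> 1" and iz: "iz < n" "a iz = 1"
    and xy: "0 < x" "x < y" "y < 1" and m: "(\<Sum>i<n. real (s i)) * (1 - x) \<le> x"
  shows "(\<Sum>i<n. geo_nll (s i) x (a i)) \<le> (\<Sum>i<n. geo_nll (s i) y (a i))"
proof -
  define m where "m = (\<Sum>i<n. real (s i))"
  define G where "G i = ln (1 - y * a i) - ln (1 - x * a i)" for i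
  have diff: "geo_nll (s i) x (a i) - geo_nll (s i) y (a i) = G i + real (s i) * (ln y - ln x)" for i
    by (simp add: geo_nll_def G_def algebra_simps)
  have pos: "0 < 1 - y * a i" "0 < 1 - x * a i" if "i < n" for i
  proof -
    have "y * a i \<le> y" "x * a i \<le> x" using a[OF that] xy by (simp_all add: mult_left_le)
    then show "0 < 1 - y * a i" "0 < 1 - x * a i" using xy by linarith+
  qed
  have G_le: "G i \<le> 0" if "i < n" for i
  proof -
    have "x * a i \<le> y * a i" using a[OF that] xy by (intro mult_right_mono) auto
    then show ?thesis unfolding G_def using pos[OF that] by simp
  qed
  have G_iz: "G iz \<le> (1 - y)/(1 - x) - 1" unfolding G_def using iz xy ln_diff_le[of "1-y" "1-x"] by simp
  have "(\<Sum>i<n. G i) = G iz + (\<Sum>i\<in>{..<n}-{iz}. G i)" using iz by (simp add: sum.remove)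
  also have "\<dots> \<le> G iz"
  proof -
    have "sum G ({..<n}-{iz}) \<le> 0" by (rule sum_nonpos) (use G_le in auto)
    then show ?thesis by simp
  qed
  finally have G_sum: "(\<Sum>i<n. G i) \<le> (1 - y)/(1 - x) - 1" using G_iz by linarith
  have m_nonneg: "m \<ge> 0" unfolding m_def by (simp add: sum_nonneg)
  have ln_le: "ln y - ln x \<le> y / x - 1" using xy by (intro ln_diff_le) auto
  have s_sum: "(\<Sum>i<n. real (s i) * (ln y - ln x)) = m * (ln y - ln x)"
    unfolding m_def by (simp add: sum_distrib_right)
  have "m * (ln y - ln x) \<le> m * (y/x - 1)" using ln_le m_nonneg by (simp add: mult_left_mono)
  moreover have "(1 - y)/(1 - x) - 1 + m * (y/x - 1) \<le> 0"
  proof -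
    have eq: "(1 - y)/(1 - x) - 1 + m * (y/x - 1) = (y - x) * (m * (1 - x) - x) / (x * (1 - x))"
      using xy by (simp add: field_simps)
    have "(y - x) * (m * (1 - x) - x) \<le> 0" using xy m unfolding m_def[symmetric]
      by (intro mult_nonneg_nonpos) auto
    then show ?thesis unfolding eq using xy by (simp add: divide_nonpos_pos)
  qed
  ultimately have "(\<Sum>i<n. geo_nll (s i) x (a i) - geo_nll (s i) y (a i)) \<le> 0"
    unfolding diff sum.distrib s_sum using G_sum by linarith
  then show ?thesis by (simp add: sum_subtractf)
qed

lemma sum_geo_nll_le_at_larger_beta:
  fixes s :: "nat \<Rightarrow> nat" and a :: "nat \<Rightarrow> real" and x y :: real
  assumes a: "\<And>i. i < n \<Longrightarrow> 0 \<le> a i \<and> a i \<le> 1"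
    and xy: "0 < x" "x < y" "y < 1" and m: "real n * y \<le> (\<Sum>i<n. real (s i)) * (1 - y)"
  shows "(\<Sum>i<n. geo_nll (s i) y (a i)) \<le> (\<Sum>i<n. geo_nll (s i) x (a i))"
proof -
  define m where "m = (\<Sum>i<n. real (s i))"
  define G where "G i = ln (1 - x * a i) - ln (1 - y * a i)" for i
  have diff: "geo_nll (s i) y (a i) - geo_nll (s i) x (a i) = G i + real (s i) * (ln x - ln y)" for i
    by (simp add: geo_nll_def G_def algebra_simps)
  have G_le: "G i \<le> (y - x) / (1 - y)" if "i < n" for i
  proof -
    have "y * a i \<le> y" "x * a i \<le> x" using a[OF that] xy by (simp_all add: mult_left_le)
    then have p: "0 < 1 - y * a i" "0 < 1 - x * a i" "1 - y \<le> 1 - y * a i" using xy by linarith+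
    have "G i \<le> (1 - x * a i) / (1 - y * a i) - 1" unfolding G_def using p by (intro ln_diff_le) auto
    also have "\<dots> = ((y - x) * a i) / (1 - y * a i)" using p by (simp add: field_simps)
    also have "\<dots> \<le> (y - x) / (1 - y)"
      using a[OF that] xy p by (intro frac_le) (auto simp: mult_left_le)
    finally show ?thesis .
  qed
  have G_sum: "(\<Sum>i<n. G i) \<le> real n * ((y - x) / (1 - y))"
    using sum_mono[of "{..<n}" G "\<lambda>_. (y - x) / (1 - y)"] G_le by simp
  have m_nonneg: "m \<ge> 0" unfolding m_def by (simp add: sum_nonneg)
  have ln_le: "ln x - ln y \<le> x / y - 1" using xy by (intro ln_diff_le) auto
  have s_sum: "(\<Sum>i<n. real (s i) * (ln x - ln y)) = m * (ln x - ln y)"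
    unfolding m_def by (simp add: sum_distrib_right)
  have "m * (ln x - ln y) \<le> m * (x/y - 1)" using ln_le m_nonneg by (simp add: mult_left_mono)
  moreover have "real n * ((y - x) / (1 - y)) + m * (x/y - 1) \<le> 0"
  proof -
    have eq: "real n * ((y - x) / (1 - y)) + m * (x/y - 1) = (y - x) * (real n * y - m * (1 - y)) / (y * (1 - y))"
      using xy by (simp add: field_simps)
    have "(y - x) * (real n * y - m * (1 - y)) \<le> 0" using xy m unfolding m_def[symmetric]
      by (intro mult_nonneg_nonpos) auto
    then show ?thesis unfolding eq using xy by (simp add: divide_nonpos_pos)
  qed
  ultimately have "(\<Sum>i<n. geo_nll (s i) y (a i) - geo_nll (s i) x (a i)) \<le> 0"
    unfolding diff sum.distrib s_sum using G_sum by linarith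
  then show ?thesis by (simp add: sum_subtractf)
qed

lemma ln_one_minus_rate_diff_le:
  fixes \<alpha> \<eta> \<beta> :: real
  assumes \<alpha>: "0 \<le> \<alpha>" "\<alpha> \<le> \<eta>" and \<eta>: "\<eta> \<le> 1 / 2" and \<beta>: "0 < \<beta>" "\<beta> < 1"
  shows "ln (1 - \<beta> * \<alpha> ^ l) - ln (1 - \<beta> * \<eta> ^ l) \<le> (\<eta> - \<alpha>) / (1 - \<eta>)"
proof (cases l)
  case 0
  then show ?thesis using assms by simp
next
  case (Suc q)
  have "\<eta> ^ l \<le> \<eta>" using Suc \<alpha> \<eta> by (simp add: mult_left_le power_le_one)
  moreover have powers: "\<alpha> ^ l \<le> \<eta> ^ l" using \<alpha> by (intro power_mono) auto
  moreover have "\<beta> * \<eta> ^ l \<le> \<eta> ^ l" "\<beta> * \<alpha> ^ l \<le> \<alpha> ^ l"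
    using \<alpha> \<beta> by (simp_all add: mult_left_le_one_le)
  ultimately have pos: "0 < 1 - \<beta> * \<eta> ^ l" "0 < 1 - \<beta> * \<alpha> ^ l" "1 - \<eta> \<le> 1 - \<beta> * \<eta> ^ l"
    using \<eta> by linarith+
  have "ln (1 - \<beta> * \<alpha> ^ l) - ln (1 - \<beta> * \<eta> ^ l) \<le> (1 - \<beta> * \<alpha> ^ l) / (1 - \<beta> * \<eta> ^ l) - 1"
    using pos by (intro ln_diff_le) auto
  also have "\<dots> = \<beta> * (\<eta> ^ l - \<alpha> ^ l) / (1 - \<beta> * \<eta> ^ l)"
    using pos by (simp add: field_simps)
  also have "\<dots> \<le> (\<eta> ^ l - \<alpha> ^ l) / (1 - \<eta>)"
    using \<beta> powers pos \<eta> by (intro frac_le) (auto simp: mult_left_le_one_le)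
  also have "\<dots> \<le> (\<eta> - \<alpha>) / (1 - \<eta>)"
    unfolding Suc using power_diff_le_diff[of \<alpha> \<eta> q] \<alpha> \<eta> by (intro divide_right_mono) auto
  finally show ?thesis .
qed

lemma alpha_min_gap_le:
  fixes \<alpha> \<eta> :: real and n k :: nat
  assumes nk: "1 \<le> n" "1 \<le> k" and \<eta>: "\<eta> = 1 / (1 + real n * real k)" and \<alpha>: "0 < \<alpha>" "\<alpha> < \<eta>"
  shows "real n * ((\<eta> - \<alpha>) / (1 - \<eta>)) \<le> ln \<eta> - ln \<alpha>"
proof -
  define M where "M = real n * real k"
  define t where "t = \<alpha> / \<eta>"
  have M: "1 \<le> M" using nk mult_mono[of 1 "real n" 1 "real k"] unfolding M_def by simp
  have \<eta>M: "\<eta> = 1 / (1 + M)" unfolding \<eta> M_def ..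
  have t: "0 < t" "t < 1" using \<alpha> unfolding t_def by simp_all
  have "1 - \<eta> = M / (1 + M)" "\<eta> - \<alpha> = (1 - t) / (1 + M)"
    unfolding t_def \<eta>M using M by (simp_all add: field_simps)
  then have "(\<eta> - \<alpha>) / (1 - \<eta>) = (1 - t) / M" using M by simp
  then have "real n * ((\<eta> - \<alpha>) / (1 - \<eta>)) = (1 - t) / real k"
    unfolding M_def using nk by (simp add: field_simps)
  also have "\<dots> \<le> 1 - t" using t nk by (simp add: divide_le_eq)
  also have "\<dots> \<le> - ln t" using ln_le_minus_one[of t] t by linarith
  also have "\<dots> = ln \<eta> - ln \<alpha>" unfolding t_def using \<alpha> by (simp add: ln_div)
  finally show ?thesis .
qed

text \<open>Raising alpha to alpha_min costs at most n (alpha_min - alpha)/(1 - alpha_min) in the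
  terms -ln(1 - beta alpha^l), which is paid for by the gain ln alpha_min - ln alpha of a single
  term with s > 0 and l > 0.\<close>

lemma sum_geo_nll_le_at_alpha_min:
  fixes s l :: "nat \<Rightarrow> nat" and \<alpha> \<beta> :: real and k n :: nat
  assumes nk: "1 \<le> n" "1 \<le> k" and \<alpha>: "0 < \<alpha>" "\<alpha> < 1 / (1 + real n * real k)"
    and \<beta>: "0 < \<beta>" "\<beta> < 1" and j: "j < n" "0 < s j" "0 < l j"
  shows "(\<Sum>i<n. geo_nll (s i) \<beta> ((1 / (1 + real n * real k)) ^ l i))
    \<le> (\<Sum>i<n. geo_nll (s i) \<beta> (\<alpha> ^ l i))"
proof -
  define \<eta> where "\<eta> = 1 / (1 + real n * real k)"
  define D where "D = ln \<eta> - ln \<alpha>"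
  define E where "E = (\<eta> - \<alpha>) / (1 - \<eta>)"
  have "1 \<le> real n * real k" using nk mult_mono[of 1 "real n" 1 "real k"] by simp
  then have \<eta>: "0 < \<eta>" "\<eta> \<le> 1 / 2" "\<alpha> < \<eta>" using \<alpha> unfolding \<eta>_def by (auto simp: field_simps)
  then have "0 < D" unfolding D_def using \<alpha> by simp
  have per_term: "geo_nll (s i) \<beta> (\<eta> ^ l i) \<le> geo_nll (s i) \<beta> (\<alpha> ^ l i) + E - real (s i) * real (l i) * D"
    for i
    using ln_one_minus_rate_diff_le[of \<alpha> \<eta> \<beta> "l i"] \<alpha> \<eta> \<beta>
    by (simp add: geo_nll_def D_def E_def ln_realpow algebra_simps)
  have "D \<le> real (s j) * real (l j) * D"
    using j \<open>0 < D\<close> mult_mono[of 1 "real (s j)" 1 "real (l j)"] by simp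
  also have "\<dots> \<le> (\<Sum>i<n. real (s i) * real (l i) * D)"
    using j \<open>0 < D\<close> by (intro member_le_sum) auto
  finally have gain: "D \<le> (\<Sum>i<n. real (s i) * real (l i) * D)" .
  have "real n * E \<le> D"
    unfolding D_def E_def using alpha_min_gap_le[OF nk \<eta>_def \<alpha>(1) \<eta>(3)] .
  have "(\<Sum>i<n. geo_nll (s i) \<beta> (\<eta> ^ l i))
      \<le> (\<Sum>i<n. geo_nll (s i) \<beta> (\<alpha> ^ l i) + E - real (s i) * real (l i) * D)"
    by (rule sum_mono) (rule per_term)
  also have "\<dots> \<le> (\<Sum>i<n. geo_nll (s i) \<beta> (\<alpha> ^ l i))"
    using gain \<open>real n * E \<le> D\<close> by (simp add: sum.distrib sum_subtractf)
  finally show ?thesis unfolding \<eta>_def .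
qed

lemma geo_nll_le_approx:
  fixes tb b ta a \<epsilon> :: real
  assumes b: "0 < tb" "tb \<le> b" "b < 1" "- ln tb \<le> (1 + \<epsilon>) * - ln b"
    and a: "0 \<le> ta" "ta \<le> a" "a < 1" "0 < a \<Longrightarrow> 0 < ta \<and> - ln ta \<le> (1 + \<epsilon>) * - ln a"
    and \<epsilon>: "0 < \<epsilon>"
  shows "geo_nll s tb (ta ^ l) \<le> (1 + \<epsilon>) * geo_nll s b (a ^ l)"
proof -
  have "b * a ^ l \<le> b" using a b by (simp add: mult_left_le power_le_one)
  then have pos: "0 < 1 - b * a ^ l" using b by linarith
  have "tb * ta ^ l \<le> b * a ^ l" using a b by (intro mult_mono power_mono) auto
  moreover have "0 \<le> tb * ta ^ l" using a b by simp
  ultimately have rate: "- ln (1 - tb * ta ^ l) \<le> - ln (1 - b * a ^ l)" using pos by simp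
  have "0 \<le> - ln (1 - b * a ^ l)" using a b pos by simp
  then have rate_nonneg: "0 \<le> \<epsilon> * - ln (1 - b * a ^ l)" using \<epsilon> by (intro mult_nonneg_nonneg) auto
  have beta: "- real s * ln tb \<le> (1 + \<epsilon>) * (- real s * ln b)"
    using mult_left_mono[OF b(4), of "real s"] by (simp add: algebra_simps)
  have alpha: "- real s * ln (ta ^ l) \<le> (1 + \<epsilon>) * (- real s * ln (a ^ l))"
  proof (cases "a = 0")
    case True
    then show ?thesis using a by (cases l) simp_all
  next
    case False
    then have ta: "0 < ta" "- ln ta \<le> (1 + \<epsilon>) * - ln a" and "0 < a" using a by auto
    have "real s * real l * - ln ta \<le> real s * real l * ((1 + \<epsilon>) * - ln a)"
      using ta by (intro mult_left_mono) auto
    then show ?thesis using ta \<open>0 < a\<close> by (simp add: ln_realpow algebra_simps)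
  qed
  show ?thesis
    unfolding geo_nll_def using rate rate_nonneg beta alpha by (simp add: algebra_simps)
qed

lemma uniform_rate_nll_le:
  fixes s :: "nat \<Rightarrow> nat" and a :: "nat \<Rightarrow> real" and b \<sigma> \<epsilon> P :: real
  assumes b: "0 < b" "b \<le> \<sigma>" "\<sigma> < 1" and \<epsilon>: "0 < \<epsilon>" and P: "0 \<le> P"
    and a: "\<And>i. i < n \<Longrightarrow> \<sigma> powr \<epsilon> \<le> a i \<and> a i \<le> 1"
  shows "real n * - ln (1 - b * \<sigma> powr \<epsilon>) - (\<Sum>i<n. real (s i)) * ln (b * \<sigma> powr \<epsilon>)
    \<le> (1 + \<epsilon>) * ((\<Sum>i<n. geo_nll (s i) b (a i)) + P)"
proof -
  define t where "t = b * \<sigma> powr \<epsilon>"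
  define m where "m = (\<Sum>i<n. real (s i))"
  have \<sigma>: "0 < \<sigma>" using b by linarith
  have "\<sigma> powr \<epsilon> \<le> 1" using \<sigma> b \<epsilon> by (simp add: powr_le1)
  then have "t \<le> b" using b unfolding t_def by (simp add: mult_left_le)
  moreover have "0 < t" unfolding t_def using b \<sigma> by simp
  ultimately have t: "0 < t" "t < 1" using b by auto
  have m: "0 \<le> m" unfolding m_def by (simp add: sum_nonneg)
  have "- ln (1 - t) - real (s i) * ln b \<le> geo_nll (s i) b (a i)" if i: "i < n" for i
  proof -
    have ai: "\<sigma> powr \<epsilon> \<le> a i" "a i \<le> 1" using a[OF i] by auto
    moreover have "0 < \<sigma> powr \<epsilon>" using \<sigma> by simp
    ultimately have "0 < a i" by linarith
    have "t \<le> b * a i" unfolding t_def using ai b by simp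
    moreover have "b * a i < 1" using ai b mult_left_le[of "a i" b] by linarith
    ultimately have "- ln (1 - t) \<le> - ln (1 - b * a i)" using t by simp
    moreover have "0 \<le> - real (s i) * ln (a i)" using ai \<open>0 < a i\<close> by (simp add: mult_nonneg_nonpos)
    ultimately show ?thesis unfolding geo_nll_def by linarith
  qed
  then have terms: "real n * - ln (1 - t) - m * ln b \<le> (\<Sum>i<n. geo_nll (s i) b (a i))"
    using sum_mono[of "{..<n}" "\<lambda>i. - ln (1 - t) - real (s i) * ln b"]
    by (simp add: m_def sum_subtractf sum_distrib_right)
  have "ln t = ln b + \<epsilon> * ln \<sigma>" unfolding t_def using b \<sigma> by (simp add: ln_mult ln_powr)
  moreover have "ln b \<le> ln \<sigma>" using b by simp
  ultimately have "- m * ln t \<le> (1 + \<epsilon>) * (- m * ln b)"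
    using mult_left_mono[of "ln b" "ln \<sigma>" "m * \<epsilon>"] m \<epsilon> by (simp add: algebra_simps)
  moreover have "0 \<le> \<epsilon> * (real n * - ln (1 - t))" using t \<epsilon> by (intro mult_nonneg_nonneg) auto
  moreover have "0 \<le> (1 + \<epsilon>) * P" using P \<epsilon> by simp
  ultimately show ?thesis
    using mult_left_mono[OF terms, of "1 + \<epsilon>"] \<epsilon> unfolding t_def[symmetric] m_def[symmetric]
    by (simp add: algebra_simps)
qed

lemma geometric_grid_approx:
  fixes \<eta> x U \<epsilon> :: real
  assumes \<eta>: "0 < \<eta>" "\<eta> \<le> x" and U: "x \<le> U" "U < 1" and \<epsilon>: "0 < \<epsilon>"
  shows "\<exists>j. (\<forall>i\<le>j. \<eta> powr cval \<epsilon> i \<le> U) \<and> 0 < \<eta> powr cval \<epsilon> j \<and> \<eta> powr cval \<epsilon> j \<le> x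
    \<and> - ln (\<eta> powr cval \<epsilon> j) \<le> (1 + \<epsilon>) * - ln x"
proof -
  define c where "c = ln x / ln \<eta>"
  have ln: "ln \<eta> < 0" "ln \<eta> \<le> ln x" "ln x < 0" using assms by auto
  then have c: "0 < c" "c \<le> 1" unfolding c_def by (auto simp: divide_simps)
  have c_ln: "c * ln \<eta> = ln x" unfolding c_def using ln by simp
  have below_x: "\<eta> powr y \<le> x" if "c \<le> y" for y
  proof -
    have "\<eta> powr y \<le> \<eta> powr c" using that \<eta> U by (intro powr_mono') auto
    also have "\<dots> = x" using c_ln \<eta> by (simp add: powr_def)
    finally show ?thesis .
  qed
  have "\<exists>j. cval \<epsilon> j < c"
    using real_arch_pow_inv[of c "1 / (1 + \<epsilon>)"] c \<epsilon> by (simp add: cval_def power_one_over)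
  define J where "J = (LEAST j. cval \<epsilon> j < c)"
  have J: "cval \<epsilon> J < c"
    unfolding J_def using \<open>\<exists>j. cval \<epsilon> j < c\<close> by (rule LeastI_ex)
  moreover have "\<not> cval \<epsilon> 0 < c" using c by (simp add: cval_def)
  ultimately obtain j where j: "J = Suc j" by (cases J) auto
  then have "c \<le> cval \<epsilon> j"
    using not_less_Least[of j "\<lambda>j. cval \<epsilon> j < c"] unfolding J_def by (simp add: not_less)
  moreover have "cval \<epsilon> j \<le> cval \<epsilon> i" if "i \<le> j" for i
    unfolding cval_def using \<epsilon> that by (intro divide_left_mono power_increasing) auto
  ultimately have "\<forall>i\<le>j. \<eta> powr cval \<epsilon> i \<le> U" using below_x U by (meson order_trans)
  moreover have "\<eta> powr cval \<epsilon> j \<le> x" using below_x \<open>c \<le> cval \<epsilon> j\<close> .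
  moreover have "- ln (\<eta> powr cval \<epsilon> j) \<le> (1 + \<epsilon>) * - ln x"
  proof -
    have "cval \<epsilon> j = (1 + \<epsilon>) * cval \<epsilon> J" unfolding j cval_def using \<epsilon> by simp
    then have "- ln (\<eta> powr cval \<epsilon> j) = (1 + \<epsilon>) * cval \<epsilon> J * - ln \<eta>" using \<eta> by simp
    also have "\<dots> \<le> (1 + \<epsilon>) * c * - ln \<eta>"
      using J ln \<epsilon> by (intro mult_right_mono mult_left_mono) auto
    also have "\<dots> = (1 + \<epsilon>) * - ln x" using c_ln by (simp add: algebra_simps)
    finally show ?thesis .
  qed
  ultimately show ?thesis using \<eta> by auto
qed

section \<open>The approximation guarantee\<close>

text \<open>The constants \<eta> = \<mu>/(\<mu> + 1) and \<mu>/(\<mu> + 1/n) of GeoAlpha and \<eta> = 1/(1 + n k) of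
  ApproxGeo.\<close>

definition beta_min :: "nat list \<Rightarrow> real" where
  "beta_min S = mean S / (mean S + 1)"

definition beta_max :: "nat list \<Rightarrow> real" where
  "beta_max S = mean S / (mean S + 1 / real (length S))"

definition alpha_min :: "nat list \<Rightarrow> nat \<Rightarrow> real" where
  "alpha_min S k = 1 / (1 + real (length S) * real k)"

lemma geo_alpha_betas_eq:
  "geo_alpha_betas S \<epsilon> =
    {beta_min S powr cval \<epsilon> j | j. \<forall>i\<le>j. beta_min S powr cval \<epsilon> i \<le> beta_max S}"
  unfolding geo_alpha_betas_def beta_min_def beta_max_def Let_def ..

lemma approx_alphas_eq:
  "approx_alphas S k \<epsilon> =
    {alpha_min S k powr cval \<epsilon> j | j. \<forall>i\<le>j. alpha_min S k powr cval \<epsilon> i \<le> beta_max S powr (\<epsilon> / real k)}"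
  unfolding approx_alphas_def alpha_min_def beta_max_def Let_def ..

text \<open>For a sequence of zeros every beta in (0,1) is observed, and the score of the all-zero
  level sequence strictly decreases as beta tends to 0, so ApproxGeo has no output at all.\<close>

lemma no_approx_geo_output_if_mean_zero:
  assumes "S \<noteq> []" "mean S = 0"
  shows "\<not> approx_geo_output S \<gamma> k \<epsilon> L \<alpha> \<beta>"
proof
  assume out: "approx_geo_output S \<gamma> k \<epsilon> L \<alpha> \<beta>"
  have total: "(\<Sum>i<length S. real (S ! i)) = 0" using assms by (simp add: mean_def)
  have "0 < 1 + real (length S) * real k" by (intro add_pos_nonneg) auto
  then have "0 < alpha_min S k powr c" for c by (simp add: alpha_min_def)
  then have "approx_alphas S k \<epsilon> = {}"
    using assms by (auto simp: approx_alphas_eq beta_max_def not_le)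
  then have obs: "approx_geo_obs S \<gamma> k \<epsilon> = {(replicate (length S) 0, 0, b) | b. 0 < b \<and> b < 1}"
    using assms by (simp add: approx_geo_obs_def geo_alpha_obs_def)
  obtain b where b: "L = replicate (length S) 0" "\<alpha> = 0" "\<beta> = b" "0 < b" "b < 1"
    using out obs by (auto simp: approx_geo_output_def)
  then have "(replicate (length S) 0, 0, b / 2) \<in> approx_geo_obs S \<gamma> k \<epsilon>"
    unfolding obs by (auto intro!: exI[of _ "b / 2"])
  then have "score_geo L S \<alpha> \<beta> \<gamma> \<le> score_geo (replicate (length S) 0) S 0 (b / 2) \<gamma>"
    using out by (auto simp: approx_geo_output_def)
  then have "- ln (1 - b) \<le> - ln (1 - b / 2)"
    using b total assms by (simp add: score_geo_all_zero_levels)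
  moreover have "ln (1 - b) < ln (1 - b / 2)" using b by simp
  ultimately show False by simp
qed

locale geo_instance =
  fixes S :: "nat list" and \<gamma> \<epsilon> :: real and k :: nat
  assumes gamma_pos: "0 < \<gamma>" and k_pos: "0 < k" and eps_pos: "0 < \<epsilon>"
    and mean_pos: "0 < mean S"
begin

abbreviation total :: real where
  "total \<equiv> \<Sum>i<length S. real (S ! i)"

lemma length_pos: "0 < length S"
  using mean_pos by (auto simp: mean_def)

lemma total_pos: "0 < total"
  using mean_pos length_pos by (simp add: mean_def zero_less_divide_iff)

lemma beta_min_eq: "beta_min S = total / (total + real (length S))"
  using length_pos total_pos by (simp add: beta_min_def mean_def field_simps)

lemma beta_max_eq: "beta_max S = total / (total + 1)"
  using length_pos total_pos by (simp add: beta_max_def mean_def field_simps)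

lemma beta_min_pos: "0 < beta_min S"
  using length_pos total_pos by (simp add: beta_min_eq)

lemma beta_min_le_max: "beta_min S \<le> beta_max S"
proof -
  have "1 \<le> real (length S)" using length_pos by (simp add: Suc_le_eq)
  then show ?thesis
    using total_pos unfolding beta_min_eq beta_max_eq by (intro divide_left_mono) auto
qed

lemma beta_max_lt_1: "beta_max S < 1"
  using total_pos by (simp add: beta_max_eq)

lemma alpha_min_pos: "0 < alpha_min S k"
  unfolding alpha_min_def by (intro divide_pos_pos add_pos_nonneg) auto

lemma alpha_min_lt_1: "alpha_min S k < 1"
proof -
  have "0 < real (length S) * real k" using length_pos k_pos by simp
  then show ?thesis by (simp add: alpha_min_def)
qed

lemma viterbi_out_observed:
  assumes "\<beta> \<in> geo_alpha_betas S \<epsilon>" "\<alpha> = 0 \<or> \<alpha> \<in> approx_alphas S k \<epsilon>"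
    and "viterbi_out S \<alpha> \<beta> \<gamma> k L"
  shows "(L, \<alpha>, \<beta>) \<in> approx_geo_obs S \<gamma> k \<epsilon>"
  using assms mean_pos by (auto simp: approx_geo_obs_def geo_alpha_obs_def)

lemma exists_zero_level_solution:
  assumes feas: "geo_feasible S k L \<alpha> \<beta>" and fin: "score_geo L S \<alpha> \<beta> \<gamma> \<noteq> \<infinity>"
  obtains L' \<beta>' where "valid_levels k (length S) L'" "0 < \<beta>'" "\<beta>' < 1"
    "\<exists>i<length S. L' ! i = 0" "score_geo L' S \<alpha> \<beta>' \<gamma> \<le> score_geo L S \<alpha> \<beta> \<gamma>"
proof (cases "\<alpha> = 0")
  case True
  have "\<exists>i<length S. L ! i = 0"
  proof (rule ccontr)
    assume "\<not> (\<exists>i<length S. L ! i = 0)"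
    then have "S ! i = 0" if "i < length S" for i
      using zero_rate_compatible_if_score_finite[OF fin] True that
      by (auto simp: zero_rate_compatible_def)
    then show False using total_pos by simp
  qed
  then show ?thesis using that[of L \<beta>] feas by (auto simp: geo_feasible_def)
next
  case False
  then have \<alpha>: "0 < \<alpha>" "\<alpha> < 1" and \<beta>: "0 < \<beta>" "\<beta> < 1"
    and len: "length L = length S" and levels: "\<forall>x\<in>set L. x \<le> k"
    using feas by (auto simp: geo_feasible_def valid_levels_def)
  define m0 where "m0 = Min (set L)"
  have "m0 \<in> set L" unfolding m0_def using len length_pos by (intro Min_in) auto
  then obtain i0 where i0: "i0 < length S" "L ! i0 = m0" using len by (auto simp: in_set_conv_nth)
  have low: "\<forall>x\<in>set L. m0 \<le> x" unfolding m0_def by simp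
  have "valid_levels k (length S) (map (\<lambda>x. x - m0) L)"
    using levels len by (auto simp: valid_levels_def)
  moreover have "\<exists>i<length S. map (\<lambda>x. x - m0) L ! i = 0" using i0 len by auto
  moreover have "\<beta> * \<alpha> ^ m0 \<le> \<beta>" using \<alpha> \<beta> by (simp add: mult_left_le power_le_one)
  then have "0 < \<beta> * \<alpha> ^ m0" "\<beta> * \<alpha> ^ m0 < 1" using \<alpha> \<beta> by (simp, linarith)
  ultimately show ?thesis
    using that score_geo_shift_levels[OF less_imp_le[OF gamma_pos] len low] by blast
qed

lemma exists_alpha_above_min:
  assumes \<beta>: "0 < \<beta>" "\<beta> < 1" and \<alpha>: "0 \<le> \<alpha>" "\<alpha> < 1"
  obtains \<alpha>' where "0 \<le> \<alpha>'" "\<alpha>' < 1" "\<alpha>' = 0 \<or> alpha_min S k \<le> \<alpha>'"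
    "score_geo L S \<alpha>' \<beta> \<gamma> \<le> score_geo L S \<alpha> \<beta> \<gamma>"
proof (cases "\<alpha> = 0 \<or> alpha_min S k \<le> \<alpha>")
  case True
  then show ?thesis using that \<alpha> by blast
next
  case False
  then have small: "0 < \<alpha>" "\<alpha> < alpha_min S k" using \<alpha> by auto
  show ?thesis
  proof (cases "\<exists>j<length S. 0 < S ! j \<and> 0 < L ! j")
    case True
    then obtain j where j: "j < length S" "0 < S ! j" "0 < L ! j" by blast
    have "(\<Sum>i<length S. geo_nll (S ! i) \<beta> (alpha_min S k ^ (L ! i)))
        \<le> (\<Sum>i<length S. geo_nll (S ! i) \<beta> (\<alpha> ^ (L ! i)))"
      using sum_geo_nll_le_at_alpha_min[of "length S" k \<alpha> \<beta> j "\<lambda>i. S ! i" "\<lambda>i. L ! i"]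
        length_pos k_pos small \<beta> j by (simp add: alpha_min_def Suc_le_eq)
    then have "score_geo L S (alpha_min S k) \<beta> \<gamma> \<le> score_geo L S \<alpha> \<beta> \<gamma>"
      using \<beta> small alpha_min_pos alpha_min_lt_1
      by (simp add: score_geo_eq_sum zero_rate_compatible_def)
    then show ?thesis using that[of "alpha_min S k"] alpha_min_pos alpha_min_lt_1 by auto
  next
    case False
    then have "score_geo L S 0 \<beta> \<gamma> \<le> score_geo L S \<alpha> \<beta> \<gamma>"
      using \<alpha> \<beta> by (intro score_geo_alpha_zero_le) auto
    then show ?thesis using that[of 0] by simp
  qed
qed

lemma exists_beta_in_range:
  assumes zero_level: "\<exists>i<length S. L ! i = 0" and \<alpha>: "0 \<le> \<alpha>" "\<alpha> \<le> 1"
    and compat: "zero_rate_compatible S L \<alpha>" and \<beta>: "0 < \<beta>" "\<beta> < 1"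
  obtains \<beta>' where "beta_min S \<le> \<beta>'" "\<beta>' \<le> beta_max S"
    "score_geo L S \<alpha> \<beta>' \<gamma> \<le> score_geo L S \<alpha> \<beta> \<gamma>"
proof -
  define A where "A b = (\<Sum>i<length S. geo_nll (S ! i) b (\<alpha> ^ (L ! i)))" for b
  have A_le: "score_geo L S \<alpha> b \<gamma> \<le> score_geo L S \<alpha> \<beta> \<gamma>" if "0 < b" "b < 1" "A b \<le> A \<beta>" for b
    using that \<alpha> \<beta> compat by (simp add: score_geo_eq_sum A_def)
  have powers: "0 \<le> \<alpha> ^ (L ! i) \<and> \<alpha> ^ (L ! i) \<le> 1" for i using \<alpha> by (simp add: power_le_one)
  have range: "0 < beta_max S" "beta_min S < 1"
    using beta_min_pos beta_min_le_max beta_max_lt_1 by linarith+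
  consider "beta_max S < \<beta>" | "\<beta> < beta_min S" | "beta_min S \<le> \<beta> \<and> \<beta> \<le> beta_max S" by linarith
  then show thesis
  proof cases
    case 1
    obtain i0 where "i0 < length S" "L ! i0 = 0" using zero_level by blast
    moreover have "total * (1 - beta_max S) \<le> beta_max S"
      using total_pos by (simp add: beta_max_eq field_simps)
    ultimately have "A (beta_max S) \<le> A \<beta>" unfolding A_def
      using sum_geo_nll_le_at_smaller_beta[of "length S" "\<lambda>i. \<alpha> ^ (L ! i)" i0 "beta_max S" \<beta> "\<lambda>i. S ! i"]
        powers range 1 \<beta> by simp
    then show ?thesis using that[of "beta_max S"] A_le range beta_min_le_max beta_max_lt_1 by simp
  next
    case 2
    have "real (length S) * beta_min S \<le> total * (1 - beta_min S)"
      using total_pos length_pos by (simp add: beta_min_eq field_simps)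
    then have "A (beta_min S) \<le> A \<beta>" unfolding A_def
      using sum_geo_nll_le_at_larger_beta[of "length S" "\<lambda>i. \<alpha> ^ (L ! i)" \<beta> "beta_min S" "\<lambda>i. S ! i"]
        powers range 2 \<beta> by simp
    then show ?thesis using that[of "beta_min S"] A_le range beta_min_pos beta_min_le_max by simp
  next
    case 3
    then show ?thesis using that by blast
  qed
qed

lemma exists_normalized_solution:
  assumes feas: "geo_feasible S k L \<alpha> \<beta>" and fin: "score_geo L S \<alpha> \<beta> \<gamma> \<noteq> \<infinity>"
  obtains L' \<alpha>' \<beta>' where "valid_levels k (length S) L'" "0 \<le> \<alpha>'" "\<alpha>' < 1"
    "\<alpha>' = 0 \<or> alpha_min S k \<le> \<alpha>'" "beta_min S \<le> \<beta>'" "\<beta>' \<le> beta_max S"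
    "zero_rate_compatible S L' \<alpha>'" "score_geo L' S \<alpha>' \<beta>' \<gamma> \<le> score_geo L S \<alpha> \<beta> \<gamma>"
proof -
  obtain L1 \<beta>1 where L1: "valid_levels k (length S) L1" "0 < \<beta>1" "\<beta>1 < 1"
      "\<exists>i<length S. L1 ! i = 0" "score_geo L1 S \<alpha> \<beta>1 \<gamma> \<le> score_geo L S \<alpha> \<beta> \<gamma>"
    using exists_zero_level_solution[OF feas fin] .
  obtain \<alpha>1 where \<alpha>1: "0 \<le> \<alpha>1" "\<alpha>1 < 1" "\<alpha>1 = 0 \<or> alpha_min S k \<le> \<alpha>1"
      "score_geo L1 S \<alpha>1 \<beta>1 \<gamma> \<le> score_geo L1 S \<alpha> \<beta>1 \<gamma>"
    using exists_alpha_above_min[OF L1(2,3)] feas by (auto simp: geo_feasible_def)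
  have "score_geo L1 S \<alpha>1 \<beta>1 \<gamma> \<noteq> \<infinity>"
    using fin \<alpha>1(4) L1(5) by (metis dual_order.trans ereal_infty_less_eq(1))
  then have compat: "zero_rate_compatible S L1 \<alpha>1"
    by (rule zero_rate_compatible_if_score_finite)
  obtain \<beta>2 where "beta_min S \<le> \<beta>2" "\<beta>2 \<le> beta_max S"
      "score_geo L1 S \<alpha>1 \<beta>2 \<gamma> \<le> score_geo L1 S \<alpha>1 \<beta>1 \<gamma>"
    using exists_beta_in_range[OF L1(4) \<alpha>1(1) _ compat L1(2,3)] \<alpha>1(2) by auto
  then show thesis
    using that[of L1 \<alpha>1 \<beta>2] L1 \<alpha>1 compat by (meson order_trans)
qed

lemma observed_near_large_alpha:
  assumes lev: "valid_levels k (length S) L"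
    and \<alpha>: "beta_max S powr (\<epsilon> / real k) < \<alpha>" "\<alpha> \<le> 1"
    and \<beta>: "beta_min S \<le> \<beta>" "\<beta> \<le> beta_max S"
  shows "\<exists>L' \<alpha>' \<beta>'. (L', \<alpha>', \<beta>') \<in> approx_geo_obs S \<gamma> k \<epsilon> \<and>
    score_geo L' S \<alpha>' \<beta>' \<gamma> \<le> ereal (1 + \<epsilon>) * score_geo L S \<alpha> \<beta> \<gamma>"
proof -
  define \<sigma> where "\<sigma> = beta_max S"
  have \<sigma>: "0 < \<sigma>" "\<sigma> < 1" using beta_min_pos beta_min_le_max beta_max_lt_1 unfolding \<sigma>_def by auto
  have \<beta>\<sigma>: "0 < \<beta>" "\<beta> \<le> \<sigma>" using \<beta> beta_min_pos unfolding \<sigma>_def by auto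
  have "0 < \<alpha>" using \<alpha> \<sigma> unfolding \<sigma>_def by (meson le_less_trans powr_ge_zero)
  have levels: "\<sigma> powr \<epsilon> \<le> \<alpha> ^ (L ! i) \<and> \<alpha> ^ (L ! i) \<le> 1" if "i < length S" for i
  proof -
    have "\<sigma> powr \<epsilon> = (\<sigma> powr (\<epsilon> / real k)) ^ k"
      using \<sigma> k_pos by (simp add: powr_realpow[symmetric] powr_powr)
    also have "\<dots> \<le> \<alpha> ^ k" using \<alpha> unfolding \<sigma>_def by (intro power_mono) auto
    also have "\<dots> \<le> \<alpha> ^ (L ! i)"
      using lev that \<alpha> \<open>0 < \<alpha>\<close> by (intro power_decreasing) (auto simp: valid_levels_def)
    finally show ?thesis using \<alpha> \<open>0 < \<alpha>\<close> power_le_one[of \<alpha> "L ! i"] by simp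
  qed
  obtain Lv where Lv: "viterbi_out S 0 (beta_min S) \<gamma> k Lv" using viterbi_out_exists by blast
  have "beta_min S \<in> geo_alpha_betas S \<epsilon>"
    unfolding geo_alpha_betas_eq using beta_min_pos beta_min_le_max
    by (auto intro!: exI[of _ 0] simp: cval_def)
  then have observed: "(Lv, 0, beta_min S) \<in> approx_geo_obs S \<gamma> k \<epsilon>"
    using Lv by (intro viterbi_out_observed) auto
  have "valid_levels k (length S) (replicate (length S) 0)" by (simp add: valid_levels_def)
  then have "score_geo Lv S 0 (beta_min S) \<gamma> \<le> score_geo (replicate (length S) 0) S 0 (beta_min S) \<gamma>"
    using Lv by (simp add: viterbi_out_def)
  also have "\<dots> = ereal (real (length S) * - ln (1 - beta_min S) - total * ln (beta_min S))"
    using beta_min_pos beta_min_le_max beta_max_lt_1 by (intro score_geo_all_zero_levels) auto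
  also have "\<dots> \<le> ereal (real (length S) * - ln (1 - \<beta> * \<sigma> powr \<epsilon>) - total * ln (\<beta> * \<sigma> powr \<epsilon>))"
  proof -
    have "\<sigma> powr \<epsilon> \<le> 1" using \<sigma> eps_pos by (simp add: powr_le1)
    then have "\<beta> * \<sigma> powr \<epsilon> \<le> \<beta>" using \<beta>\<sigma> by (simp add: mult_left_le)
    then have "\<beta> * \<sigma> powr \<epsilon> < 1" using \<beta>\<sigma> \<sigma> by linarith
    moreover have "0 < \<beta> * \<sigma> powr \<epsilon>" using \<beta>\<sigma> \<sigma> by simp
    ultimately show ?thesis
      using mle_rate_minimizes_nll[of "real (length S)" total "\<beta> * \<sigma> powr \<epsilon>"] length_pos total_pos
      by (simp add: beta_min_eq)
  qed
  also have "\<dots> \<le> ereal ((1 + \<epsilon>) * ((\<Sum>i<length S. geo_nll (S ! i) \<beta> (\<alpha> ^ (L ! i)))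
                      + (\<Sum>i<length S. pen \<gamma> (length S) ((0 # L) ! i) (L ! i))))"
    using uniform_rate_nll_le[of \<beta> \<sigma> \<epsilon> _ "length S" "\<lambda>i. \<alpha> ^ (L ! i)" "\<lambda>i. S ! i"]
      levels \<beta>\<sigma> \<sigma> eps_pos pen_nonneg gamma_pos
    by (simp add: sum_nonneg less_imp_le)
  also have "\<dots> = ereal (1 + \<epsilon>) * score_geo L S \<alpha> \<beta> \<gamma>"
    using \<open>0 < \<alpha>\<close> \<alpha> \<beta> \<sigma> beta_min_pos unfolding \<sigma>_def
    by (simp add: score_geo_eq_sum zero_rate_compatible_def)
  finally show ?thesis using observed by blast
qed

lemma observed_near_small_alpha:
  assumes lev: "valid_levels k (length S) L"
    and \<alpha>: "0 \<le> \<alpha>" "\<alpha> \<le> beta_max S powr (\<epsilon> / real k)" "\<alpha> = 0 \<or> alpha_min S k \<le> \<alpha>"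
    and \<beta>: "beta_min S \<le> \<beta>" "\<beta> \<le> beta_max S" and compat: "zero_rate_compatible S L \<alpha>"
  shows "\<exists>L' \<alpha>' \<beta>'. (L', \<alpha>', \<beta>') \<in> approx_geo_obs S \<gamma> k \<epsilon> \<and>
    score_geo L' S \<alpha>' \<beta>' \<gamma> \<le> ereal (1 + \<epsilon>) * score_geo L S \<alpha> \<beta> \<gamma>"
proof -
  have \<sigma>: "0 < beta_max S" "beta_max S < 1"
    using beta_min_pos beta_min_le_max beta_max_lt_1 by auto
  then have U: "beta_max S powr (\<epsilon> / real k) < 1"
    using eps_pos k_pos powr_less_mono2[of "\<epsilon> / real k" "beta_max S" 1] by simp
  have \<alpha>1: "\<alpha> < 1" using \<alpha> U by linarith
  obtain j where j: "\<forall>i\<le>j. beta_min S powr cval \<epsilon> i \<le> beta_max S"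
      "0 < beta_min S powr cval \<epsilon> j" "beta_min S powr cval \<epsilon> j \<le> \<beta>"
      "- ln (beta_min S powr cval \<epsilon> j) \<le> (1 + \<epsilon>) * - ln \<beta>"
    using geometric_grid_approx[OF beta_min_pos \<beta> beta_max_lt_1 eps_pos] by blast
  define \<beta>t where "\<beta>t = beta_min S powr cval \<epsilon> j"
  have \<beta>t: "\<beta>t \<in> geo_alpha_betas S \<epsilon>" "0 < \<beta>t" "\<beta>t \<le> \<beta>" "- ln \<beta>t \<le> (1 + \<epsilon>) * - ln \<beta>"
    unfolding geo_alpha_betas_eq \<beta>t_def using j by blast+
  obtain \<alpha>t where \<alpha>t: "0 \<le> \<alpha>t" "\<alpha>t \<le> \<alpha>" "0 < \<alpha> \<Longrightarrow> 0 < \<alpha>t \<and> - ln \<alpha>t \<le> (1 + \<epsilon>) * - ln \<alpha>"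
      "\<alpha>t = 0 \<or> \<alpha>t \<in> approx_alphas S k \<epsilon>"
  proof (cases "\<alpha> = 0")
    case True
    then show ?thesis using that[of 0] by simp
  next
    case False
    then obtain i where "\<forall>i'\<le>i. alpha_min S k powr cval \<epsilon> i' \<le> beta_max S powr (\<epsilon> / real k)"
        "0 < alpha_min S k powr cval \<epsilon> i" "alpha_min S k powr cval \<epsilon> i \<le> \<alpha>"
        "- ln (alpha_min S k powr cval \<epsilon> i) \<le> (1 + \<epsilon>) * - ln \<alpha>"
      using geometric_grid_approx[OF alpha_min_pos _ \<alpha>(2) U eps_pos] \<alpha>(3) by blast
    then show ?thesis using that[of "alpha_min S k powr cval \<epsilon> i"] by (auto simp: approx_alphas_eq)
  qed
  have compat_t: "zero_rate_compatible S L \<alpha>t"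
    using compat \<alpha> \<alpha>t by (cases "\<alpha> = 0") (auto simp: zero_rate_compatible_def)
  obtain Lv where Lv: "viterbi_out S \<alpha>t \<beta>t \<gamma> k Lv" using viterbi_out_exists by blast
  then have observed: "(Lv, \<alpha>t, \<beta>t) \<in> approx_geo_obs S \<gamma> k \<epsilon>"
    using \<beta>t(1) \<alpha>t(4) by (rule viterbi_out_observed[rotated 2])
  define P where "P = (\<Sum>i<length S. pen \<gamma> (length S) ((0 # L) ! i) (L ! i))"
  have "0 \<le> P" unfolding P_def using gamma_pos pen_nonneg by (simp add: sum_nonneg less_imp_le)
  have "score_geo Lv S \<alpha>t \<beta>t \<gamma> \<le> score_geo L S \<alpha>t \<beta>t \<gamma>" using Lv lev by (simp add: viterbi_out_def)
  also have "\<dots> = ereal ((\<Sum>i<length S. geo_nll (S ! i) \<beta>t (\<alpha>t ^ (L ! i))) + P)"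
    unfolding P_def using \<beta>t \<beta> \<sigma> \<alpha>t \<alpha>1 compat_t by (intro score_geo_eq_sum) auto
  also have "\<dots> \<le> ereal ((1 + \<epsilon>) * (\<Sum>i<length S. geo_nll (S ! i) \<beta> (\<alpha> ^ (L ! i))) + (1 + \<epsilon>) * P)"
  proof -
    have "geo_nll s \<beta>t (\<alpha>t ^ l) \<le> (1 + \<epsilon>) * geo_nll s \<beta> (\<alpha> ^ l)" for s l
      using \<beta>t \<beta> \<sigma> \<alpha>t \<alpha>1 eps_pos by (intro geo_nll_le_approx) auto
    then have "(\<Sum>i<length S. geo_nll (S ! i) \<beta>t (\<alpha>t ^ (L ! i)))
        \<le> (1 + \<epsilon>) * (\<Sum>i<length S. geo_nll (S ! i) \<beta> (\<alpha> ^ (L ! i)))"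
      by (simp add: sum_distrib_left sum_mono)
    moreover have "P \<le> (1 + \<epsilon>) * P" using \<open>0 \<le> P\<close> eps_pos by (simp add: distrib_right)
    ultimately show ?thesis by simp
  qed
  also have "\<dots> = ereal (1 + \<epsilon>) * score_geo L S \<alpha> \<beta> \<gamma>"
    unfolding P_def using \<beta> \<sigma> \<alpha> \<alpha>1 compat beta_min_pos
    by (simp add: score_geo_eq_sum distrib_left)
  finally show ?thesis using observed by blast
qed

lemma approx_geo_output_le:
  assumes out: "approx_geo_output S \<gamma> k \<epsilon> L \<alpha> \<beta>" and feas: "geo_feasible S k L' \<alpha>' \<beta>'"
  shows "score_geo L S \<alpha> \<beta> \<gamma> \<le> ereal (1 + \<epsilon>) * score_geo L' S \<alpha>' \<beta>' \<gamma>"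
proof (cases "score_geo L' S \<alpha>' \<beta>' \<gamma> = \<infinity>")
  case True
  then show ?thesis using eps_pos by simp
next
  case False
  obtain L1 \<alpha>1 \<beta>1 where L1: "valid_levels k (length S) L1" "0 \<le> \<alpha>1" "\<alpha>1 < 1"
      "\<alpha>1 = 0 \<or> alpha_min S k \<le> \<alpha>1" "beta_min S \<le> \<beta>1" "\<beta>1 \<le> beta_max S"
      "zero_rate_compatible S L1 \<alpha>1" "score_geo L1 S \<alpha>1 \<beta>1 \<gamma> \<le> score_geo L' S \<alpha>' \<beta>' \<gamma>"
    using exists_normalized_solution[OF feas False] .
  obtain L2 \<alpha>2 \<beta>2 where observed: "(L2, \<alpha>2, \<beta>2) \<in> approx_geo_obs S \<gamma> k \<epsilon>"
      and near: "score_geo L2 S \<alpha>2 \<beta>2 \<gamma> \<le> ereal (1 + \<epsilon>) * score_geo L1 S \<alpha>1 \<beta>1 \<gamma>"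
    using observed_near_large_alpha[of L1 \<alpha>1 \<beta>1] observed_near_small_alpha[of L1 \<alpha>1 \<beta>1] L1
    by (cases "beta_max S powr (\<epsilon> / real k) < \<alpha>1") auto
  have "score_geo L S \<alpha> \<beta> \<gamma> \<le> score_geo L2 S \<alpha>2 \<beta>2 \<gamma>"
    using out observed by (auto simp: approx_geo_output_def)
  also note near
  also have "ereal (1 + \<epsilon>) * score_geo L1 S \<alpha>1 \<beta>1 \<gamma> \<le> ereal (1 + \<epsilon>) * score_geo L' S \<alpha>' \<beta>' \<gamma>"
    using L1(8) eps_pos by (intro ereal_mult_left_mono) auto
  finally show ?thesis .
qed

end

theorem proposition4:
  fixes S :: "nat list" and \<gamma> \<epsilon> :: real and k :: nat
    and Lopt L :: "nat list" and \<alpha>opt \<beta>opt \<alpha> \<beta> :: real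
  assumes "\<gamma> > 0" and "k > 0" and "\<epsilon> > 0"
    and "geo_optimal S \<gamma> k Lopt \<alpha>opt \<beta>opt"
    and "approx_geo_output S \<gamma> k \<epsilon> L \<alpha> \<beta>"
  shows "score_geo L S \<alpha> \<beta> \<gamma> \<le> ereal (1 + \<epsilon>) * score_geo Lopt S \<alpha>opt \<beta>opt \<gamma>"
proof -
  have feas: "geo_feasible S k Lopt \<alpha>opt \<beta>opt" using assms(4) by (simp add: geo_optimal_def)
  have "0 \<le> mean S" by (simp add: mean_def sum_nonneg)
  then consider "S = []" | "S \<noteq> []" "mean S = 0" | "0 < mean S" by linarith
  then show ?thesis
  proof cases
    case 1
    then show ?thesis by (simp add: score_geo_def)
  next
    case 2
    then show ?thesis using no_approx_geo_output_if_mean_zero assms(5) by blast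
  next
    case 3
    then interpret geo_instance S \<gamma> \<epsilon> k using assms(1-3) by unfold_locales
    show ?thesis using approx_geo_output_le[OF assms(5) feas] .
  qed
qed

end
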